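(* Let $0<\epsilon<1/3$. Suppose $H=(X^1\cup X^2\cup X^3,E)$ is a $3$-partite $3$-graph, $D_1,D_2,D_3\subseteq V(H)$, and $(D_1,D_2,D_3)$ is an $\epsilon$-regular triple in $H$. Then one of the following holds: (1) $d_H(D_1,D_2,D_3)\leq\epsilon$; or (2) there are pairwise distinct $f(1),f(2),f(3)\in\{1,2,3\}$ such that $|D_i\cap X^{f(i)}|\geq(1-2\epsilon)|D_i|$ for each $i\in\{1,2,3\}$.
   Context: A $3$-graph $H=(V,E)$ is $3$-partite with partition $V=X^1\cup X^2\cup X^3$ if every edge meets each $X^i$ in at most one vertex. For nonempty $X,Y,Z\subseteq V$, $d_H(X,Y,Z)=|\{(x,y,z)\in X\times Y\times Z:\{x,y,z\}\in E\}|/(|X||Y||Z|)$. A triple $(X,Y,Z)$ is $\epsilon$-regular in $H$ if for all $X'\subseteq X,Y'\subseteq Y,Z'\subseteq Z$ with $|X'|\ge\epsilon|X|,|Y'|\ge\epsilon|Y|,|Z'|\ge\epsilon|Z|$, $|d_H(X,Y,Z)-d_H(X',Y',Z')|\le\epsilon$. *)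

theory Defs
  imports Complex_Main
begin

definition three_graph :: "'a set \<Rightarrow> 'a set set \<Rightarrow> bool" where
  "three_graph V E \<longleftrightarrow> finite V \<and> (\<forall>e\<in>E. e \<subseteq> V \<and> card e = 3)"

definition three_partite :: "'a set \<Rightarrow> 'a set set \<Rightarrow> (nat \<Rightarrow> 'a set) \<Rightarrow> bool" where
  "three_partite V E X \<longleftrightarrow> three_graph V E \<and> V = X 1 \<union> X 2 \<union> X 3 \<and>
     X 1 \<inter> X 2 = {} \<and> X 1 \<inter> X 3 = {} \<and> X 2 \<inter> X 3 = {} \<and>
     (\<forall>e\<in>E. \<forall>i\<in>{1,2,3}. card (e \<inter> X i) \<le> 1)"

definition density :: "'a set set \<Rightarrow> 'a set \<Rightarrow> 'a set \<Rightarrow> 'a set \<Rightarrow> real" where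
  "density E A B C =
     real (card {(x,y,z). x \<in> A \<and> y \<in> B \<and> z \<in> C \<and> {x,y,z} \<in> E})
     / (real (card A) * real (card B) * real (card C))"

definition eps_regular :: "real \<Rightarrow> 'a set set \<Rightarrow> 'a set \<Rightarrow> 'a set \<Rightarrow> 'a set \<Rightarrow> bool" where
  "eps_regular \<epsilon> E A B C \<longleftrightarrow> A \<noteq> {} \<and> B \<noteq> {} \<and> C \<noteq> {} \<and>
     (\<forall>A' B' C'. A' \<subseteq> A \<and> B' \<subseteq> B \<and> C' \<subseteq> C \<and>
        real (card A') \<ge> \<epsilon> * real (card A) \<and> real (card B') \<ge> \<epsilon> * real (card B) \<and>
        real (card C') \<ge> \<epsilon> * real (card C) \<longrightarrow>
        \<bar>density E A B C - density E A' B' C'\<bar> \<le> \<epsilon>)"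

end

(* If the density d of (D 1, D 2, D 3) exceeds \<epsilon>, call a part X j large for D i when it
   contains at least an \<epsilon>-fraction of D i; every D i has a large part because 3\<epsilon> < 1.
   By \<epsilon>-regularity, large parts of D 1, D 2, D 3 span a subtriple of density at least
   d - \<epsilon> > 0, hence an edge, and as an edge meets every part at most once these parts are
   distinct. So each D i has exactly one large part (the large parts of the other two sets
   leave only one candidate), and since the two remaining parts hold less than \<epsilon>|D i| each,
   the large one holds at least (1 - 2\<epsilon>)|D i|. *)
theory Submission
  imports Defs
begin

lemma relation_is_permutation_graph:
  fixes P :: "nat \<Rightarrow> nat \<Rightarrow> bool"
  assumes "\<And>i. i \<in> {1,2,3} \<Longrightarrow> \<exists>j\<in>{1,2,3}. P i j"
    and "\<And>a b c. a \<in> {1,2,3} \<Longrightarrow> b \<in> {1,2,3} \<Longrightarrow> c \<in> {1,2,3} \<Longrightarrow>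
           P 1 a \<Longrightarrow> P 2 b \<Longrightarrow> P 3 c \<Longrightarrow> distinct [a, b, c]"
  shows "\<exists>f. f ` {1,2,3} \<subseteq> {1,2,3} \<and> inj_on f {1,2,3} \<and>
             (\<forall>i\<in>{1,2,3}. \<forall>j\<in>{1,2,3}. P i j \<longleftrightarrow> j = f i)"
proof -
  obtain a where a: "a \<in> {1,2,3}" "P 1 a"
    using assms(1)[of 1] by blast
  obtain b where b: "b \<in> {1,2,3}" "P 2 b"
    using assms(1)[of 2] by blast
  obtain c where c: "c \<in> {1,2,3}" "P 3 c"
    using assms(1)[of 3] by blast
  have abc: "distinct [a, b, c]"
    using assms(2)[OF a(1) b(1) c(1) a(2) b(2) c(2)] .
  then have parts: "{1,2,3} = {a, b, c}"
    using a(1) b(1) c(1) by auto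
  define f where "f i = (if i = 1 then a else if i = 2 then b else c)" for i :: nat
  have "P 1 j \<longleftrightarrow> j = a" if "j \<in> {1,2,3}" for j
    using assms(2)[OF that b(1) c(1) _ b(2) c(2)] a(2) that abc unfolding parts by auto
  moreover have "P 2 j \<longleftrightarrow> j = b" if "j \<in> {1,2,3}" for j
    using assms(2)[OF a(1) that c(1) a(2) _ c(2)] b(2) that abc unfolding parts by auto
  moreover have "P 3 j \<longleftrightarrow> j = c" if "j \<in> {1,2,3}" for j
    using assms(2)[OF a(1) b(1) that a(2) b(2)] c(2) that abc unfolding parts by auto
  ultimately have "\<forall>i\<in>{1,2,3}. \<forall>j\<in>{1,2,3}. P i j \<longleftrightarrow> j = f i"
    by (simp add: f_def)
  moreover have "f ` {1,2,3} \<subseteq> {1,2,3}"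
    using a(1) b(1) c(1) by (simp add: f_def)
  moreover have "inj_on f {1,2,3}"
    using abc by (simp add: f_def inj_on_insert)
  ultimately show ?thesis
    by blast
qed

lemma three_partiteD:
  assumes "three_partite V E X"
  shows "finite V" "V = X 1 \<union> X 2 \<union> X 3" "X 1 \<inter> X 2 = {}" "X 1 \<inter> X 3 = {}" "X 2 \<inter> X 3 = {}"
    and "e \<in> E \<Longrightarrow> card e = 3" "e \<in> E \<Longrightarrow> i \<in> {1,2,3} \<Longrightarrow> card (e \<inter> X i) \<le> 1"
  using assms unfolding three_partite_def three_graph_def by blast+

lemma three_partite_card_eq_sum_parts:
  assumes "three_partite V E X" "D \<subseteq> V"
  shows "card D = card (D \<inter> X 1) + card (D \<inter> X 2) + card (D \<inter> X 3)"
proof -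
  note tp = three_partiteD(1-5)[OF assms(1)]
  have fin: "finite D"
    using tp(1) assms(2) by (rule finite_subset[rotated])
  have parts: "D = (D \<inter> X 1) \<union> (D \<inter> X 2) \<union> (D \<inter> X 3)"
    using assms(2) tp(2) by blast
  have "card D = card ((D \<inter> X 1) \<union> (D \<inter> X 2)) + card (D \<inter> X 3)"
    using fin tp(3-5) by (subst parts, intro card_Un_disjoint) auto
  also have "card ((D \<inter> X 1) \<union> (D \<inter> X 2)) = card (D \<inter> X 1) + card (D \<inter> X 2)"
    using fin tp(3) by (intro card_Un_disjoint) auto
  finally show ?thesis .
qed

lemma three_partite_large_part_if_others_small:
  fixes \<epsilon> :: real
  assumes "three_partite V E X" "D \<subseteq> V" "k \<in> {1,2,3}"
    and "\<forall>j\<in>{1,2,3}. j \<noteq> k \<longrightarrow> card (D \<inter> X j) \<le> \<epsilon> * card D"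
  shows "(1 - 2 * \<epsilon>) * card D \<le> card (D \<inter> X k)"
proof -
  have sum: "real (card D) = card (D \<inter> X 1) + card (D \<inter> X 2) + card (D \<inter> X 3)"
    unfolding three_partite_card_eq_sum_parts[OF assms(1,2)] by (simp only: of_nat_add)
  have small: "card (D \<inter> X j) \<le> \<epsilon> * card D" if "j \<in> {1,2,3}" "j \<noteq> k" for j
    using assms(4) that by blast
  have "card D - 2 * (\<epsilon> * card D) \<le> card (D \<inter> X k)"
    using assms(3)
  proof (elim insertE emptyE)
    assume k: "k = 1"
    have "card (D \<inter> X 2) \<le> \<epsilon> * card D" "card (D \<inter> X 3) \<le> \<epsilon> * card D"
      by (rule small; simp add: k)+
    then show ?thesis
      unfolding k using sum by linarith
  next
    assume k: "k = 2"
    have "card (D \<inter> X 1) \<le> \<epsilon> * card D" "card (D \<inter> X 3) \<le> \<epsilon> * card D"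
      by (rule small; simp add: k)+
    then show ?thesis
      unfolding k using sum by linarith
  next
    assume k: "k = 3"
    have "card (D \<inter> X 1) \<le> \<epsilon> * card D" "card (D \<inter> X 2) \<le> \<epsilon> * card D"
      by (rule small; simp add: k)+
    then show ?thesis
      unfolding k using sum by linarith
  qed
  then show ?thesis
    by (simp add: left_diff_distrib)
qed

lemma three_partite_exists_large_part:
  fixes \<epsilon> :: real
  assumes "three_partite V E X" "D \<subseteq> V" "\<epsilon> \<le> 1/3"
  shows "\<exists>j\<in>{1,2,3}. \<epsilon> * card D \<le> card (D \<inter> X j)"
proof (rule ccontr)
  assume "\<not> ?thesis"
  then have "card (D \<inter> X 1) < \<epsilon> * card D" "card (D \<inter> X 2) < \<epsilon> * card D"
      "card (D \<inter> X 3) < \<epsilon> * card D"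
    by (meson insertI1 insertI2 not_le)+
  moreover have "real (card D) = card (D \<inter> X 1) + card (D \<inter> X 2) + card (D \<inter> X 3)"
    unfolding three_partite_card_eq_sum_parts[OF assms(1,2)] by (simp only: of_nat_add)
  moreover have "3 * (\<epsilon> * card D) \<le> card D"
    using mult_right_mono[OF assms(3), of "real (card D)"] by simp
  ultimately show False
    by linarith
qed

lemma three_partite_edge_in_distinct_parts:
  assumes "three_partite V E X" "{x, y, z} \<in> E"
    and "x \<in> X a" "y \<in> X b" "z \<in> X c" "a \<in> {1,2,3}" "b \<in> {1,2,3}" "c \<in> {1,2,3}"
  shows "distinct [a, b, c]"
proof -
  note edge = three_partiteD(6,7)[OF assms(1)]
  have not_same_part: False
    if "{u, v, w} \<in> E" "i \<in> {1,2,3}" "u \<in> X i" "v \<in> X i" for u v w i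
  proof -
    have "u \<noteq> v"
      using edge(1)[OF that(1)] by (auto simp: card_insert_if split: if_splits)
    moreover have "card {u, v} \<le> card ({u, v, w} \<inter> X i)"
      using that(3,4) by (intro card_mono) auto
    ultimately show False
      using edge(2)[OF that(1,2)] by simp
  qed
  have xzy: "{x, z, y} \<in> E" and yzx: "{y, z, x} \<in> E"
    using assms(2) by (simp_all add: insert_commute)
  have "a \<noteq> b"
    using not_same_part[OF assms(2) assms(6) assms(3)] assms(4) by blast
  moreover have "a \<noteq> c"
    using not_same_part[OF xzy assms(6) assms(3)] assms(5) by blast
  moreover have "b \<noteq> c"
    using not_same_part[OF yzx assms(7) assms(4)] assms(5) by blast
  ultimately show ?thesis
    by simp
qed

lemma density_pos_imp_distinct_parts:
  assumes "three_partite V E X" "0 < density E A B C"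
    and "A \<subseteq> X a" "B \<subseteq> X b" "C \<subseteq> X c" "a \<in> {1,2,3}" "b \<in> {1,2,3}" "c \<in> {1,2,3}"
  shows "distinct [a, b, c]"
proof -
  have "{(x, y, z). x \<in> A \<and> y \<in> B \<and> z \<in> C \<and> {x, y, z} \<in> E} \<noteq> {}"
  proof
    assume no_edges: "{(x, y, z). x \<in> A \<and> y \<in> B \<and> z \<in> C \<and> {x, y, z} \<in> E} = {}"
    show False
      using assms(2) unfolding density_def no_edges by simp
  qed
  then obtain x y z where "x \<in> A" "y \<in> B" "z \<in> C" "{x, y, z} \<in> E"
    by blast
  then show ?thesis
    using three_partite_edge_in_distinct_parts[OF assms(1) _ _ _ _ assms(6-8)] assms(3-5) by blast
qed

lemma eps_regular_large_parts_distinct: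
  assumes "three_partite V E X" "eps_regular \<epsilon> E A B C" "\<epsilon> < density E A B C"
    and "a \<in> {1,2,3}" "b \<in> {1,2,3}" "c \<in> {1,2,3}"
    and "\<epsilon> * card A \<le> card (A \<inter> X a)" "\<epsilon> * card B \<le> card (B \<inter> X b)"
      "\<epsilon> * card C \<le> card (C \<inter> X c)"
  shows "distinct [a, b, c]"
proof -
  have regular: "\<bar>density E A B C - density E A' B' C'\<bar> \<le> \<epsilon>"
    if "A' \<subseteq> A" "B' \<subseteq> B" "C' \<subseteq> C" "\<epsilon> * card A \<le> card A'" "\<epsilon> * card B \<le> card B'"
      "\<epsilon> * card C \<le> card C'" for A' B' C'
    using assms(2) that unfolding eps_regular_def by blast
  have "\<bar>density E A B C - density E (A \<inter> X a) (B \<inter> X b) (C \<inter> X c)\<bar> \<le> \<epsilon>"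
    using regular[OF Int_lower1 Int_lower1 Int_lower1 assms(7-9)] .
  then have "0 < density E (A \<inter> X a) (B \<inter> X b) (C \<inter> X c)"
    using assms(3) by linarith
  then show ?thesis
    by (rule density_pos_imp_distinct_parts[OF assms(1) _ Int_lower2 Int_lower2 Int_lower2 assms(4-6)])
qed

theorem lemma5p2:
  fixes \<epsilon> :: real and V :: "'a set" and E :: "'a set set"
    and X :: "nat \<Rightarrow> 'a set" and D :: "nat \<Rightarrow> 'a set"
  assumes "0 < \<epsilon>" and "\<epsilon> < 1/3"
    and "three_partite V E X"
    and "D 1 \<subseteq> V" and "D 2 \<subseteq> V" and "D 3 \<subseteq> V"
    and "eps_regular \<epsilon> E (D 1) (D 2) (D 3)"
  shows "density E (D 1) (D 2) (D 3) \<le> \<epsilon> \<or>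
         (\<exists>f. f ` {1,2,3} \<subseteq> {1,2,3} \<and> inj_on f {1,2,3} \<and>
              (\<forall>i\<in>{1,2,3::nat}. real (card (D i \<inter> X (f i))) \<ge> (1 - 2*\<epsilon>) * real (card (D i))))"
proof (cases "density E (D 1) (D 2) (D 3) \<le> \<epsilon>")
  case True
  then show ?thesis by simp
next
  case False
  define large where "large i j \<longleftrightarrow> \<epsilon> * card (D i) \<le> card (D i \<inter> X j)" for i j
  have D_sub: "D i \<subseteq> V" if "i \<in> {1,2,3}" for i
    using that assms(4-6) by auto
  have exists_large: "\<exists>j\<in>{1,2,3}. large i j" if "i \<in> {1,2,3}" for i
    using three_partite_exists_large_part[OF assms(3) D_sub[OF that]] assms(2)
    unfolding large_def by simp
  have large_distinct: "distinct [a, b, c]"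
    if "a \<in> {1,2,3}" "b \<in> {1,2,3}" "c \<in> {1,2,3}" "large 1 a" "large 2 b" "large 3 c" for a b c
    using eps_regular_large_parts_distinct[OF assms(3,7) False[unfolded not_le]
        that[unfolded large_def]] .
  obtain f where f: "f ` {1,2,3} \<subseteq> {1,2,3}" "inj_on f {1,2,3}"
    "\<forall>i\<in>{1,2,3}. \<forall>j\<in>{1,2,3}. large i j \<longleftrightarrow> j = f i"
    using relation_is_permutation_graph[of large, OF exists_large large_distinct] by blast
  have "\<not> large i j" if "i \<in> {1,2,3}" "j \<in> {1,2,3}" "j \<noteq> f i" for i j
    using f(3) that by blast
  then have small_parts: "\<forall>j\<in>{1,2,3}. j \<noteq> f i \<longrightarrow> card (D i \<inter> X j) \<le> \<epsilon> * card (D i)"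
    if "i \<in> {1,2,3}" for i
    using that unfolding large_def by (meson linorder_not_le less_imp_le)
  have "(1 - 2 * \<epsilon>) * card (D i) \<le> card (D i \<inter> X (f i))" if "i \<in> {1,2,3}" for i
    using three_partite_large_part_if_others_small[OF assms(3) D_sub[OF that]
        subsetD[OF f(1) imageI[OF that]] small_parts[OF that]] .
  then show ?thesis
    using f(1,2) by (intro disjI2 exI[of _ f]) simp
qed

end
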